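(* Let $\mathcal{H}$ be a Hilbert space with inner product $[\cdot,\cdot]$, $K(\mathcal{H})$ the $C^*$-algebra of compact operators on $\mathcal{H}$, and $\mathcal{E}$ a Hilbert $K(\mathcal{H})$-module. Let $x, y\in\mathcal{E}$ and suppose $\langle x,x\rangle$ is a minimal projection. Then $x\parallel y$ if and only if there exists a unit vector $\xi\in\mathcal{H}$ such that $$\big|[\langle x,y\rangle\xi,\xi]\big| = \|y\|.$$
   Context: A (left) Hilbert $K(\mathcal{H})$-module is a left $K(\mathcal{H})$-module $\mathcal{E}$ with a $K(\mathcal{H})$-valued inner product $\langle\cdot,\cdot\rangle$, linear in the first variable and conjugate linear in the second, satisfying $\langle x,x\rangle\ge 0$ with equality iff $x=0$, $\langle ax,y\rangle = a\langle x,y\rangle$ and $\langle x,y\rangle^*=\langle y,x\rangle$, and complete for the norm $\|x\|=\|\langle x,x\rangle\|^{1/2}$. A projection $P\in B(\mathcal{H})$ is minimal if $PB(\mathcal{H})P=\mathbb{C}P$; equivalently $P=\xi\otimes\xi$ for a unit vector $\xi$, where $(\xi\otimes\eta)(\zeta)=[\zeta,\eta]\xi$. $x\parallel y$ (norm-parallel) means $\|x+\lambda y\|=\|x\|+\|y\|$ for some $\lambda\in\mathbb{C}$ with $|\lambda|=1$. *)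

theory Defs
  imports Complex_Main
begin

text \<open>A complex Hilbert space is a type 'h (an additive abelian group) together with a
complex scalar multiplication sm and a complex inner product ip (linear in the first,
conjugate linear in the second variable), complete w.r.t. the induced norm.\<close>

definition hnorm :: "('h \<Rightarrow> 'h \<Rightarrow> complex) \<Rightarrow> 'h \<Rightarrow> real" where
  "hnorm ip x = sqrt (Re (ip x x))"

definition hilbert_space :: "(complex \<Rightarrow> 'h::ab_group_add \<Rightarrow> 'h) \<Rightarrow> ('h \<Rightarrow> 'h \<Rightarrow> complex) \<Rightarrow> bool" where
  "hilbert_space sm ip \<longleftrightarrow>
     (\<forall>a b x. sm a (sm b x) = sm (a * b) x) \<and> (\<forall>x. sm 1 x = x) \<and>
     (\<forall>a x y. sm a (x + y) = sm a x + sm a y) \<and> (\<forall>a b x. sm (a + b) x = sm a x + sm b x) \<and>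
     (\<forall>x y z. ip (x + y) z = ip x z + ip y z) \<and> (\<forall>a x y. ip (sm a x) y = a * ip x y) \<and>
     (\<forall>x y. ip y x = cnj (ip x y)) \<and>
     (\<forall>x. Im (ip x x) = 0 \<and> 0 \<le> Re (ip x x)) \<and> (\<forall>x. ip x x = 0 \<longleftrightarrow> x = 0) \<and>
     (\<forall>X :: nat \<Rightarrow> 'h. (\<forall>e>0. \<exists>N. \<forall>m\<ge>N. \<forall>n\<ge>N. hnorm ip (X m - X n) < e) \<longrightarrow>
        (\<exists>L. \<forall>e>0. \<exists>N. \<forall>n\<ge>N. hnorm ip (X n - L) < e))"

definition bounded_op :: "(complex \<Rightarrow> 'h::ab_group_add \<Rightarrow> 'h) \<Rightarrow> ('h \<Rightarrow> 'h \<Rightarrow> complex) \<Rightarrow> ('h \<Rightarrow> 'h) \<Rightarrow> bool" where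
  "bounded_op sm ip T \<longleftrightarrow>
     (\<forall>x y. T (x + y) = T x + T y) \<and> (\<forall>a x. T (sm a x) = sm a (T x)) \<and>
     (\<exists>C. \<forall>x. hnorm ip (T x) \<le> C * hnorm ip x)"

definition op_norm :: "('h \<Rightarrow> 'h \<Rightarrow> complex) \<Rightarrow> ('h \<Rightarrow> 'h) \<Rightarrow> real" where
  "op_norm ip T = Sup {hnorm ip (T x) | x. hnorm ip x \<le> 1}"

definition hconverges :: "('h::ab_group_add \<Rightarrow> 'h \<Rightarrow> complex) \<Rightarrow> (nat \<Rightarrow> 'h) \<Rightarrow> bool" where
  "hconverges ip X \<longleftrightarrow> (\<exists>L. \<forall>e>0. \<exists>N. \<forall>n\<ge>N. hnorm ip (X n - L) < e)"

text \<open>Compact operator: bounded, and maps bounded sequences to sequences having a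
convergent subsequence (equivalently: the image of the unit ball is relatively compact).\<close>

definition compact_op :: "(complex \<Rightarrow> 'h::ab_group_add \<Rightarrow> 'h) \<Rightarrow> ('h \<Rightarrow> 'h \<Rightarrow> complex) \<Rightarrow> ('h \<Rightarrow> 'h) \<Rightarrow> bool" where
  "compact_op sm ip T \<longleftrightarrow> bounded_op sm ip T \<and>
     (\<forall>X :: nat \<Rightarrow> 'h. (\<exists>B. \<forall>n. hnorm ip (X n) \<le> B) \<longrightarrow>
        (\<exists>r. strict_mono r \<and> hconverges ip (\<lambda>n. T (X (r n)))))"

definition minimal_projection :: "(complex \<Rightarrow> 'h::ab_group_add \<Rightarrow> 'h) \<Rightarrow> ('h \<Rightarrow> 'h \<Rightarrow> complex) \<Rightarrow> ('h \<Rightarrow> 'h) \<Rightarrow> bool" where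
  "minimal_projection sm ip P \<longleftrightarrow> bounded_op sm ip P \<and> P \<circ> P = P \<and>
     (\<forall>x y. ip (P x) y = ip x (P y)) \<and> (\<exists>x. P x \<noteq> 0) \<and>
     (\<forall>T. bounded_op sm ip T \<longrightarrow> (\<exists>c. P \<circ> T \<circ> P = (\<lambda>x. sm c (P x))))"

text \<open>esm: complex scalar multiplication on E; act: left action of K(H) on E;
ein: the K(H)-valued inner product.  The module norm is ||x|| = ||<x,x>||^(1/2).\<close>

definition enorm :: "('h \<Rightarrow> 'h \<Rightarrow> complex) \<Rightarrow> ('e \<Rightarrow> 'e \<Rightarrow> 'h \<Rightarrow> 'h) \<Rightarrow> 'e \<Rightarrow> real" where
  "enorm ip ein x = sqrt (op_norm ip (ein x x))"

definition hilbert_K_module ::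
  "(complex \<Rightarrow> 'h::ab_group_add \<Rightarrow> 'h) \<Rightarrow> ('h \<Rightarrow> 'h \<Rightarrow> complex) \<Rightarrow>
   (complex \<Rightarrow> 'e::ab_group_add \<Rightarrow> 'e) \<Rightarrow> (('h \<Rightarrow> 'h) \<Rightarrow> 'e \<Rightarrow> 'e) \<Rightarrow> ('e \<Rightarrow> 'e \<Rightarrow> 'h \<Rightarrow> 'h) \<Rightarrow> bool" where
  "hilbert_K_module sm ip esm act ein \<longleftrightarrow>
     hilbert_space sm ip \<and>
     \<comment> \<open>E is a complex vector space\<close>
     (\<forall>a b x. esm a (esm b x) = esm (a * b) x) \<and> (\<forall>x. esm 1 x = x) \<and>
     (\<forall>a x y. esm a (x + y) = esm a x + esm a y) \<and> (\<forall>a b x. esm (a + b) x = esm a x + esm b x) \<and>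
     \<comment> \<open>E is a left K(H)-module (compatible with the complex structure)\<close>
     (\<forall>a b x. compact_op sm ip a \<longrightarrow> compact_op sm ip b \<longrightarrow> act (a \<circ> b) x = act a (act b x)) \<and>
     (\<forall>a b x. compact_op sm ip a \<longrightarrow> compact_op sm ip b \<longrightarrow> act (\<lambda>\<xi>. a \<xi> + b \<xi>) x = act a x + act b x) \<and>
     (\<forall>a x y. compact_op sm ip a \<longrightarrow> act a (x + y) = act a x + act a y) \<and>
     (\<forall>a c x. compact_op sm ip a \<longrightarrow> act (\<lambda>\<xi>. sm c (a \<xi>)) x = esm c (act a x)) \<and>
     (\<forall>a c x. compact_op sm ip a \<longrightarrow> act a (esm c x) = esm c (act a x)) \<and>
     \<comment> \<open>K(H)-valued inner product\<close>
     (\<forall>x y. compact_op sm ip (ein x y)) \<and>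
     (\<forall>x y z. ein (x + y) z = (\<lambda>\<xi>. ein x z \<xi> + ein y z \<xi>)) \<and>
     (\<forall>c x y. ein (esm c x) y = (\<lambda>\<xi>. sm c (ein x y \<xi>))) \<and>
     (\<forall>a x y. compact_op sm ip a \<longrightarrow> ein (act a x) y = a \<circ> ein x y) \<and>
     (\<forall>x y \<xi> \<eta>. ip (ein x y \<xi>) \<eta> = ip \<xi> (ein y x \<eta>)) \<comment> \<open><x,y>* = <y,x>\<close> \<and>
     (\<forall>x \<xi>. Im (ip (ein x x \<xi>) \<xi>) = 0 \<and> 0 \<le> Re (ip (ein x x \<xi>) \<xi>)) \<comment> \<open><x,x> \<ge> 0\<close> \<and>
     (\<forall>x. ein x x = (\<lambda>_. 0) \<longleftrightarrow> x = 0) \<and>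
     \<comment> \<open>completeness w.r.t. the module norm\<close>
     (\<forall>X :: nat \<Rightarrow> 'e. (\<forall>e>0. \<exists>N. \<forall>m\<ge>N. \<forall>n\<ge>N. enorm ip ein (X m - X n) < e) \<longrightarrow>
        (\<exists>L. \<forall>e>0. \<exists>N. \<forall>n\<ge>N. enorm ip ein (X n - L) < e))"

definition norm_parallel ::
  "('h \<Rightarrow> 'h \<Rightarrow> complex) \<Rightarrow> (complex \<Rightarrow> 'e::ab_group_add \<Rightarrow> 'e) \<Rightarrow> ('e \<Rightarrow> 'e \<Rightarrow> 'h \<Rightarrow> 'h) \<Rightarrow> 'e \<Rightarrow> 'e \<Rightarrow> bool" where
  "norm_parallel ip esm ein x y \<longleftrightarrow>
     (\<exists>l::complex. cmod l = 1 \<and> enorm ip ein (x + esm l y) = enorm ip ein x + enorm ip ein y)"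

end

theory Submission
  imports Defs
begin

(*
  Minimality makes <x,x> the rank-one projection onto a unit vector xi, so ||x|| = 1 and
  x = <x,x> x, whence <x,y> = <x,x> <x,y>.  For every unit vector zeta the form
  (a,b) |-> [<a,b> zeta, zeta] is positive, and Cauchy-Schwarz for it gives
  |[<x,y> zeta, zeta]| <= ||y|| and ||x + l y|| <= 1 + ||y|| whenever |l| = 1.  Since the norm
  of a positive operator is the supremum of its quadratic form on the unit ball, x || y holds
  iff this bound is attained at xi.  If it is, evaluating <x + l y, x + l y> at xi for the
  right phase l gives (1 + ||y||)^2.  Conversely, a unit vector almost norming
  <x + l y, x + l y> is almost a multiple of xi, so |[<x,y> zeta, zeta]| is close both to
  ||y|| and to |[<x,y> xi, xi]|.  Attainment at some unit zeta forces zeta to be a multiple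
  of xi (or y = 0), hence attainment at xi.
*)

lemma exists_unimodular_cnj_mult: "\<exists>l. cmod l = 1 \<and> cnj l * z = complex_of_real (cmod z)"
proof (cases "z = 0")
  case True
  then show ?thesis by (intro exI[of _ 1]) simp
next
  case False
  have "cnj (sgn z) * z = complex_of_real (cmod z)"
    using complex_norm_square[of z] False
    by (simp add: sgn_eq power2_eq_square field_simps)
  then show ?thesis using False by (intro exI[of _ "sgn z"]) (simp add: norm_sgn)
qed

section \<open>Positive Hermitian forms\<close>

locale pos_herm_form =
  fixes f :: "complex \<Rightarrow> 'v::ab_group_add \<Rightarrow> 'v" and B :: "'v \<Rightarrow> 'v \<Rightarrow> complex"
  assumes add_left: "B (u + v) w = B u w + B v w"
    and scale_left: "B (f c u) w = c * B u w"
    and herm: "B v u = cnj (B u v)"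
    and Re_diag_nonneg: "0 \<le> Re (B u u)"
begin

lemma add_right: "B u (v + w) = B u v + B u w"
  by (metis add_left herm complex_cnj_add)

lemma scale_right: "B u (f c v) = cnj c * B u v"
  by (metis scale_left herm complex_cnj_mult)

lemma zero_left: "B 0 w = 0"
  using add_left[of 0 0 w] by simp

lemma Im_diag: "Im (B u u) = 0"
  using herm[of u u] by (simp add: complex_eq_iff)

lemma diag_of_real: "B u u = complex_of_real (Re (B u u))"
  using Im_diag[of u] by (simp add: complex_eq_iff)

lemma Re_expand:
  "Re (B (u + f t v) (u + f t v)) = Re (B u u) + 2 * Re (cnj t * B u v) + (cmod t)\<^sup>2 * Re (B v v)"
proof -
  have "B (u + f t v) (u + f t v) = B u u + cnj t * B u v + t * cnj (B u v) + t * cnj t * B v v"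
    by (simp add: add_left add_right scale_left scale_right herm[of u v] algebra_simps)
  then show ?thesis
    using Im_diag[of v] cmod_power2[of t] by (simp add: algebra_simps power2_eq_square)
qed

lemma Re_diag_shift_real:
  "0 \<le> Re (B u u) - 2 * r * (cmod (B u v))\<^sup>2 + r\<^sup>2 * (cmod (B u v))\<^sup>2 * Re (B v v)"
proof -
  define t where "t = - complex_of_real r * B u v"
  have "cnj t * B u v = - complex_of_real (r * (cmod (B u v))\<^sup>2)"
    by (simp add: t_def complex_norm_square[symmetric] mult.commute)
  moreover have "(cmod t)\<^sup>2 = r\<^sup>2 * (cmod (B u v))\<^sup>2"
    by (simp add: t_def norm_mult power_mult_distrib)
  ultimately show ?thesis
    using Re_diag_nonneg[of "u + f t v"] by (simp add: Re_expand)
qed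

lemma cauchy_schwarz: "(cmod (B u v))\<^sup>2 \<le> Re (B u u) * Re (B v v)"
proof (cases "Re (B v v) = 0")
  case True
  have "B u v = 0"
  proof (rule ccontr)
    assume "B u v \<noteq> 0"
    then show False
      using Re_diag_shift_real[of u "(Re (B u u) + 1) / (2 * (cmod (B u v))\<^sup>2)" v] True by simp
  qed
  then show ?thesis using True by simp
next
  case False
  then have "Re (B v v) > 0" using Re_diag_nonneg[of v] by simp
  then show ?thesis
    using Re_diag_shift_real[of u "1 / Re (B v v)" v]
    by (simp add: power2_eq_square field_simps)
qed

end

section \<open>Hilbert spaces and bounded operators\<close>

locale hspace =
  fixes sm :: "complex \<Rightarrow> 'h::ab_group_add \<Rightarrow> 'h" and ip :: "'h \<Rightarrow> 'h \<Rightarrow> complex"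
  assumes hilbert: "hilbert_space sm ip"

context hspace
begin

lemma sm_assoc: "sm a (sm b u) = sm (a * b) u"
  using hilbert unfolding hilbert_space_def by (elim conjE) blast

lemma sm_one: "sm 1 u = u"
  using hilbert unfolding hilbert_space_def by (elim conjE) blast

lemma sm_add_left: "sm (a + b) u = sm a u + sm b u"
  using hilbert unfolding hilbert_space_def by (elim conjE) blast

lemma ip_add_left: "ip (u + v) w = ip u w + ip v w"
  using hilbert unfolding hilbert_space_def by (elim conjE) blast

lemma ip_scale_left: "ip (sm a u) w = a * ip u w"
  using hilbert unfolding hilbert_space_def by (elim conjE) blast

lemma ip_herm: "ip v u = cnj (ip u v)"
  using hilbert unfolding hilbert_space_def by (elim conjE) blast

lemma ip_Re_diag_nonneg: "0 \<le> Re (ip u u)"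
  using hilbert unfolding hilbert_space_def by (elim conjE) blast

lemma ip_self_eq_0_iff: "ip u u = 0 \<longleftrightarrow> u = 0"
  using hilbert unfolding hilbert_space_def by (elim conjE) blast

end

sublocale hspace \<subseteq> pos_herm_form sm ip
  by unfold_locales (fact ip_add_left ip_scale_left ip_herm ip_Re_diag_nonneg)+

context hspace
begin

lemma hnorm_nonneg: "0 \<le> hnorm ip u"
  by (simp add: hnorm_def Re_diag_nonneg)

lemma hnorm_power2: "(hnorm ip u)\<^sup>2 = Re (ip u u)"
  using Re_diag_nonneg[of u] by (simp add: hnorm_def)

lemma ip_self: "ip u u = complex_of_real ((hnorm ip u)\<^sup>2)"
  using diag_of_real hnorm_power2 by simp

lemma hnorm_eq_0_iff: "hnorm ip u = 0 \<longleftrightarrow> u = 0"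
  by (metis ip_self ip_self_eq_0_iff of_real_eq_0_iff power_eq_0_iff zero_power2)

lemma hnorm_zero [simp]: "hnorm ip 0 = 0"
  by (simp add: hnorm_eq_0_iff)

lemma hnorm_pos: "u \<noteq> 0 \<Longrightarrow> 0 < hnorm ip u"
  using hnorm_nonneg hnorm_eq_0_iff by (metis less_eq_real_def)

lemma hnorm_scale: "hnorm ip (sm a u) = cmod a * hnorm ip u"
proof -
  have "(hnorm ip (sm a u))\<^sup>2 = Re (a * cnj a * ip u u)"
    by (simp add: hnorm_power2 scale_left scale_right algebra_simps)
  also have "\<dots> = ((Re a)\<^sup>2 + (Im a)\<^sup>2) * Re (ip u u)"
    using Im_diag[of u] by (simp add: algebra_simps power2_eq_square)
  also have "\<dots> = (cmod a * hnorm ip u)\<^sup>2"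
    by (simp only: power_mult_distrib cmod_power2 hnorm_power2)
  finally show ?thesis
    using hnorm_nonneg by (simp add: power2_eq_iff_nonneg)
qed

lemma ip_cauchy_schwarz: "cmod (ip u v) \<le> hnorm ip u * hnorm ip v"
proof -
  have "(cmod (ip u v))\<^sup>2 \<le> (hnorm ip u * hnorm ip v)\<^sup>2"
    using cauchy_schwarz[of u v] by (simp add: hnorm_power2 power_mult_distrib)
  then show ?thesis
    using hnorm_nonneg by (meson mult_nonneg_nonneg power2_le_imp_le)
qed

lemma sm_zero: "sm 0 u = 0"
  using sm_add_left[of 0 0 u] by simp

lemma sm_minus: "sm (- a) u = - sm a u"
  using sm_add_left[of "- a" a u] by (simp add: sm_zero eq_neg_iff_add_eq_0)

lemma hnorm_diff_proj_power2:
  assumes "hnorm ip e = 1"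
  shows "(hnorm ip (u - sm (ip u e) e))\<^sup>2 = (hnorm ip u)\<^sup>2 - (cmod (ip u e))\<^sup>2"
proof -
  have "cnj (- ip u e) * ip u e = - complex_of_real ((cmod (ip u e))\<^sup>2)"
    using complex_norm_square[of "ip u e"] by (simp add: mult.commute)
  then show ?thesis
    using Re_expand[of u "- ip u e" e] assms
    by (simp add: hnorm_power2[symmetric] sm_minus)
qed

lemma bounded_op_add: "bounded_op sm ip A \<Longrightarrow> A (u + v) = A u + A v"
  unfolding bounded_op_def by blast

lemma bounded_op_scale: "bounded_op sm ip A \<Longrightarrow> A (sm a u) = sm a (A u)"
  unfolding bounded_op_def by blast

lemma bounded_op_zero: "bounded_op sm ip A \<Longrightarrow> A 0 = 0"
  using bounded_op_add[of A 0 0] by simp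

lemma bdd_above_op_norm:
  assumes "bounded_op sm ip A"
  shows "bdd_above {hnorm ip (A u) | u. hnorm ip u \<le> 1}"
proof -
  obtain C where C: "\<And>u. hnorm ip (A u) \<le> C * hnorm ip u"
    using assms unfolding bounded_op_def by blast
  have "hnorm ip (A u) \<le> \<bar>C\<bar>" if "hnorm ip u \<le> 1" for u
    using C[of u] that hnorm_nonneg[of u]
    by (smt (verit, best) mult_left_le mult_right_mono)
  then show ?thesis unfolding bdd_above_def by blast
qed

lemma hnorm_apply_le_op_norm:
  "bounded_op sm ip A \<Longrightarrow> hnorm ip u \<le> 1 \<Longrightarrow> hnorm ip (A u) \<le> op_norm ip A"
  unfolding op_norm_def using bdd_above_op_norm by (intro cSup_upper) auto

lemma op_norm_nonneg: "bounded_op sm ip A \<Longrightarrow> 0 \<le> op_norm ip A"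
  using hnorm_apply_le_op_norm[of A 0] bounded_op_zero[of A] by simp

lemma op_norm_le: "(\<And>u. hnorm ip u \<le> 1 \<Longrightarrow> hnorm ip (A u) \<le> M) \<Longrightarrow> op_norm ip A \<le> M"
  unfolding op_norm_def by (intro cSup_least) (auto intro: exI[of _ 0])

lemma hnorm_apply_le:
  assumes "bounded_op sm ip A"
  shows "hnorm ip (A u) \<le> op_norm ip A * hnorm ip u"
proof (cases "u = 0")
  case True
  then show ?thesis using bounded_op_zero[OF assms] by simp
next
  case False
  define h where "h = hnorm ip u"
  have "h > 0" using False hnorm_pos h_def by simp
  then have "hnorm ip (sm (complex_of_real (1 / h)) u) = 1"
    by (simp add: hnorm_scale h_def norm_divide)
  then have "hnorm ip (A (sm (complex_of_real (1 / h)) u)) \<le> op_norm ip A"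
    using hnorm_apply_le_op_norm[OF assms] by simp
  then show ?thesis
    using \<open>h > 0\<close> by (simp add: bounded_op_scale[OF assms] hnorm_scale norm_divide h_def field_simps)
qed

lemma Re_ip_apply_le:
  assumes "bounded_op sm ip A"
  shows "Re (ip (A u) u) \<le> op_norm ip A * (hnorm ip u)\<^sup>2"
proof -
  have "Re (ip (A u) u) \<le> hnorm ip (A u) * hnorm ip u"
    using complex_Re_le_cmod ip_cauchy_schwarz by (rule order_trans)
  also have "\<dots> \<le> op_norm ip A * hnorm ip u * hnorm ip u"
    using hnorm_apply_le[OF assms] hnorm_nonneg by (simp add: mult_right_mono)
  finally show ?thesis by (simp add: power2_eq_square mult.assoc)
qed

lemma Re_ip_apply_le_op_norm:
  assumes "bounded_op sm ip A" "hnorm ip u \<le> 1"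
  shows "Re (ip (A u) u) \<le> op_norm ip A"
proof -
  have "(hnorm ip u)\<^sup>2 \<le> 1" using assms(2) hnorm_nonneg by (simp add: power_le_one)
  then show ?thesis
    using Re_ip_apply_le[OF assms(1), of u] op_norm_nonneg[OF assms(1)]
    by (smt (verit) mult_left_le)
qed

definition positive_op :: "('h \<Rightarrow> 'h) \<Rightarrow> bool" where
  "positive_op A \<longleftrightarrow>
     bounded_op sm ip A \<and> (\<forall>u v. ip (A u) v = ip u (A v)) \<and> (\<forall>u. 0 \<le> Re (ip (A u) u))"

lemma positive_op_form:
  assumes "positive_op A"
  shows "pos_herm_form sm (\<lambda>u v. ip (A u) v)"
proof
  fix u v w :: 'h and c :: complex
  have A: "bounded_op sm ip A" "ip (A v) u = ip v (A u)" "0 \<le> Re (ip (A u) u)"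
    using assms unfolding positive_op_def by blast+
  show "ip (A (u + v)) w = ip (A u) w + ip (A v) w" by (simp add: bounded_op_add[OF A(1)] add_left)
  show "ip (A (sm c u)) w = c * ip (A u) w" by (simp add: bounded_op_scale[OF A(1)] scale_left)
  show "ip (A v) u = cnj (ip (A u) v)" by (metis A(2) herm)
  show "0 \<le> Re (ip (A u) u)" by (fact A(3))
qed

lemma hnorm_apply_power2_le:
  assumes A: "positive_op A" and M: "\<And>v. hnorm ip v \<le> 1 \<Longrightarrow> Re (ip (A v) v) \<le> M"
    and u: "hnorm ip u \<le> 1"
  shows "(hnorm ip (A u))\<^sup>2 \<le> M * op_norm ip A"
proof -
  interpret A: pos_herm_form sm "\<lambda>u v. ip (A u) v" by (rule positive_op_form[OF A])
  have bdd: "bounded_op sm ip A" using A unfolding positive_op_def by blast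
  have M0: "0 \<le> M" using M[of 0] by (simp add: bounded_op_zero[OF bdd] zero_left)
  define h where "h = hnorm ip (A u)"
  have "h\<^sup>2 \<le> cmod (ip (A u) (A u))"
    using complex_Re_le_cmod hnorm_power2 h_def by simp
  then have "(h\<^sup>2)\<^sup>2 \<le> (cmod (ip (A u) (A u)))\<^sup>2"
    by (rule power_mono) simp
  also have "\<dots> \<le> Re (ip (A u) u) * Re (ip (A (A u)) (A u))"
    by (rule A.cauchy_schwarz)
  also have "\<dots> \<le> M * (op_norm ip A * h\<^sup>2)"
    using M[OF u] Re_ip_apply_le[OF bdd, of "A u"] A.Re_diag_nonneg M0 h_def
    by (intro mult_mono) auto
  finally have le: "h\<^sup>2 * h\<^sup>2 \<le> (M * op_norm ip A) * h\<^sup>2"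
    by (simp add: power2_eq_square mult_ac)
  show ?thesis
  proof (cases "h = 0")
    case True
    then show ?thesis using M0 op_norm_nonneg[OF bdd] h_def by simp
  next
    case False
    then show ?thesis using mult_right_le_imp_le[OF le] h_def by simp
  qed
qed

lemma op_norm_le_Re_bound:
  assumes A: "positive_op A" and M: "\<And>v. hnorm ip v \<le> 1 \<Longrightarrow> Re (ip (A v) v) \<le> M"
  shows "op_norm ip A \<le> M"
proof -
  have bdd: "bounded_op sm ip A" using A unfolding positive_op_def by blast
  define N where "N = op_norm ip A"
  have "0 \<le> M" using M[of 0] by (simp add: bounded_op_zero[OF bdd] zero_left)
  moreover have "0 \<le> N" using op_norm_nonneg[OF bdd] N_def by simp
  moreover have "N \<le> sqrt (M * N)"
    unfolding N_def
    by (rule op_norm_le) (metis hnorm_apply_power2_le[OF A M] real_le_rsqrt)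
  ultimately have le: "N * N \<le> M * N"
    using mult_mono[of N "sqrt (M * N)" N "sqrt (M * N)"] by simp
  show ?thesis
  proof (cases "N = 0")
    case True
    then show ?thesis using \<open>0 \<le> M\<close> N_def by simp
  next
    case False
    then show ?thesis using mult_right_le_imp_le[OF le] \<open>0 \<le> N\<close> N_def by simp
  qed
qed

lemma positive_op_eq_0:
  assumes "positive_op A" "\<And>v. Re (ip (A v) v) = 0"
  shows "A u = 0"
proof -
  have "op_norm ip A \<le> 0" using op_norm_le_Re_bound[OF assms(1)] assms(2) by simp
  moreover have "hnorm ip (A u) \<le> op_norm ip A * hnorm ip u"
    using assms(1) hnorm_apply_le unfolding positive_op_def by blast
  ultimately have "hnorm ip (A u) \<le> 0"
    using hnorm_nonneg[of u] by (meson mult_nonpos_nonneg order_trans)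
  then show ?thesis using hnorm_nonneg hnorm_eq_0_iff by (metis order_antisym)
qed

end

section \<open>Hilbert \<open>K(H)\<close>-modules\<close>

locale hK_module =
  fixes sm :: "complex \<Rightarrow> 'h::ab_group_add \<Rightarrow> 'h" and ip :: "'h \<Rightarrow> 'h \<Rightarrow> complex"
    and esm :: "complex \<Rightarrow> 'e::ab_group_add \<Rightarrow> 'e" and act :: "('h \<Rightarrow> 'h) \<Rightarrow> 'e \<Rightarrow> 'e"
    and ein :: "'e \<Rightarrow> 'e \<Rightarrow> 'h \<Rightarrow> 'h"
  assumes module: "hilbert_K_module sm ip esm act ein"

sublocale hK_module \<subseteq> hspace sm ip
  using module unfolding hilbert_K_module_def by unfold_locales (elim conjE)

context hK_module
begin

lemma esm_one: "esm 1 a = a"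
  using module unfolding hilbert_K_module_def by (elim conjE) (simp only:)

lemma esm_add_left: "esm (c + d) a = esm c a + esm d a"
  using module unfolding hilbert_K_module_def by (elim conjE) (simp only:)

lemma ein_compact: "compact_op sm ip (ein a b)"
  using module unfolding hilbert_K_module_def by (elim conjE) (simp only:)

lemma ein_add_left: "ein (a + b) c = (\<lambda>\<zeta>. ein a c \<zeta> + ein b c \<zeta>)"
  using module unfolding hilbert_K_module_def by (elim conjE) (simp only:)

lemma ein_scale_left: "ein (esm c a) b = (\<lambda>\<zeta>. sm c (ein a b \<zeta>))"
  using module unfolding hilbert_K_module_def by (elim conjE) (simp only:)

lemma ein_act: "compact_op sm ip A \<Longrightarrow> ein (act A a) b = A \<circ> ein a b"
  using module unfolding hilbert_K_module_def by (elim conjE) (simp only:)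

lemma ein_adjoint: "ip (ein a b \<zeta>) \<eta> = ip \<zeta> (ein b a \<eta>)"
  using module unfolding hilbert_K_module_def by (elim conjE) (simp only:)

lemma ein_Re_diag_nonneg: "0 \<le> Re (ip (ein a a \<zeta>) \<zeta>)"
  using module unfolding hilbert_K_module_def by (elim conjE) (simp only:)

lemma ein_eq_0_iff: "ein a a = (\<lambda>_. 0) \<longleftrightarrow> a = 0"
  using module unfolding hilbert_K_module_def by (elim conjE) (simp only:)

lemma esm_minus_one: "esm (- 1) a = - a"
  using esm_add_left[of "- 1" 1 a] esm_add_left[of 0 0 a]
  by (simp add: esm_one eq_neg_iff_add_eq_0)

lemma ein_bounded: "bounded_op sm ip (ein a b)"
  using ein_compact unfolding compact_op_def by blast

lemma positive_op_ein: "positive_op (ein a a)"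
  unfolding positive_op_def using ein_bounded ein_adjoint ein_Re_diag_nonneg by blast

lemma state_form: "pos_herm_form esm (\<lambda>a b. ip (ein a b \<zeta>) \<zeta>)"
proof
  fix a b c :: 'e and d :: complex
  show "ip (ein (a + b) c \<zeta>) \<zeta> = ip (ein a c \<zeta>) \<zeta> + ip (ein b c \<zeta>) \<zeta>"
    by (simp add: ein_add_left add_left)
  show "ip (ein (esm d a) c \<zeta>) \<zeta> = d * ip (ein a c \<zeta>) \<zeta>"
    by (simp add: ein_scale_left scale_left)
  show "ip (ein b a \<zeta>) \<zeta> = cnj (ip (ein a b \<zeta>) \<zeta>)"
    by (metis ein_adjoint herm)
  show "0 \<le> Re (ip (ein a a \<zeta>) \<zeta>)" by (fact ein_Re_diag_nonneg)
qed

lemma state_Re_expand: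
  "Re (ip (ein (a + esm t b) (a + esm t b) \<zeta>) \<zeta>) =
     Re (ip (ein a a \<zeta>) \<zeta>) + 2 * Re (cnj t * ip (ein a b \<zeta>) \<zeta>) + (cmod t)\<^sup>2 * Re (ip (ein b b \<zeta>) \<zeta>)"
  by (rule pos_herm_form.Re_expand[OF state_form])

lemma state_cauchy_schwarz:
  "(cmod (ip (ein a b \<zeta>) \<zeta>))\<^sup>2 \<le> Re (ip (ein a a \<zeta>) \<zeta>) * Re (ip (ein b b \<zeta>) \<zeta>)"
  by (rule pos_herm_form.cauchy_schwarz[OF state_form])

lemma enorm_nonneg: "0 \<le> enorm ip ein a"
  by (simp add: enorm_def op_norm_nonneg[OF ein_bounded])

lemma enorm_power2: "(enorm ip ein a)\<^sup>2 = op_norm ip (ein a a)"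
  by (simp add: enorm_def op_norm_nonneg[OF ein_bounded])

lemma Re_state_le_enorm_power2:
  "hnorm ip \<zeta> \<le> 1 \<Longrightarrow> Re (ip (ein a a \<zeta>) \<zeta>) \<le> (enorm ip ein a)\<^sup>2"
  using Re_ip_apply_le_op_norm[OF ein_bounded] enorm_power2 by simp

lemma enorm_le:
  assumes "\<And>\<zeta>. hnorm ip \<zeta> \<le> 1 \<Longrightarrow> Re (ip (ein a a \<zeta>) \<zeta>) \<le> M\<^sup>2" "0 \<le> M"
  shows "enorm ip ein a \<le> M"
  using op_norm_le_Re_bound[OF positive_op_ein assms(1)] enorm_power2[of a] enorm_nonneg assms(2)
  by (metis power2_le_imp_le)

lemma enorm_ge:
  assumes "hnorm ip \<zeta> \<le> 1" "M\<^sup>2 \<le> Re (ip (ein a a \<zeta>) \<zeta>)" "0 \<le> M"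
  shows "M \<le> enorm ip ein a"
  using Re_state_le_enorm_power2[OF assms(1), of a] assms(2) enorm_nonneg
  by (metis order_trans power2_le_imp_le)

lemma exists_state_near_enorm:
  assumes "0 < \<epsilon>"
  obtains \<zeta> where "hnorm ip \<zeta> \<le> 1" "(enorm ip ein a)\<^sup>2 - \<epsilon> < Re (ip (ein a a \<zeta>) \<zeta>)"
proof -
  have "\<not> op_norm ip (ein a a) \<le> (enorm ip ein a)\<^sup>2 - \<epsilon>"
    using assms enorm_power2 by simp
  then show ?thesis
    using op_norm_le_Re_bound[OF positive_op_ein] that by force
qed

end

section \<open>Elements whose inner square is a minimal projection\<close>

locale minimal_inner_square = hK_module +
  fixes x :: "'e::ab_group_add"
  assumes minimal: "minimal_projection sm ip (ein x x)"
begin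

abbreviation P where "P \<equiv> ein x x"

lemma P_idem: "P (P u) = P u"
  using minimal unfolding minimal_projection_def by (metis comp_apply)

lemma P_selfadjoint: "ip (P u) v = ip u (P v)"
  using minimal unfolding minimal_projection_def by blast

lemma P_compress: "bounded_op sm ip R \<Longrightarrow> \<exists>c. P \<circ> R \<circ> P = (\<lambda>u. sm c (P u))"
  using minimal unfolding minimal_projection_def by blast

lemma exists_unit_fixed_by_P: "\<exists>e. hnorm ip e = 1 \<and> P e = e"
proof -
  obtain u where "P u \<noteq> 0" using minimal unfolding minimal_projection_def by blast
  then have h: "0 < hnorm ip (P u)" by (rule hnorm_pos)
  define e where "e = sm (complex_of_real (1 / hnorm ip (P u))) (P u)"
  have "hnorm ip e = 1" using h by (simp add: e_def hnorm_scale norm_divide)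
  moreover have "P e = e" by (simp add: e_def bounded_op_scale[OF ein_bounded] P_idem)
  ultimately show ?thesis by blast
qed

definition \<xi> where "\<xi> = (SOME e. hnorm ip e = 1 \<and> P e = e)"

lemma hnorm_\<xi>: "hnorm ip \<xi> = 1" and P_\<xi>: "P \<xi> = \<xi>"
  using someI_ex[OF exists_unit_fixed_by_P] unfolding \<xi>_def by blast+

lemma ip_\<xi>_\<xi>: "ip \<xi> \<xi> = 1"
  using ip_self[of \<xi>] hnorm_\<xi> by simp

lemma cmod_ip_\<xi>_le: "hnorm ip u \<le> 1 \<Longrightarrow> cmod (ip u \<xi>) \<le> 1"
  using ip_cauchy_schwarz[of u \<xi>] hnorm_\<xi> by simp

text \<open>Minimality forces \<open>P\<close> to be the rank-one projection onto \<open>\<xi>\<close>: compress the rank-one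
  operator \<open>\<psi> \<mapsto> [\<psi>,\<xi>] u\<close> by \<open>P\<close> and evaluate at \<open>\<xi>\<close>.\<close>

lemma P_eq: "P u = sm (ip u \<xi>) \<xi>"
proof -
  define R where "R = (\<lambda>\<psi>. sm (ip \<psi> \<xi>) u)"
  have "bounded_op sm ip R"
    unfolding bounded_op_def
  proof (intro conjI allI exI)
    fix v w show "R (v + w) = R v + R w" by (simp add: R_def add_left sm_add_left)
  next
    fix a v show "R (sm a v) = sm a (R v)" by (simp add: R_def scale_left sm_assoc)
  next
    fix v
    have "hnorm ip (R v) \<le> hnorm ip v * hnorm ip u"
      using ip_cauchy_schwarz[of v \<xi>] hnorm_\<xi> hnorm_nonneg[of u]
      by (simp add: R_def hnorm_scale mult_right_mono)
    then show "hnorm ip (R v) \<le> hnorm ip u * hnorm ip v" by (simp add: mult.commute)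
  qed
  then obtain c where "P \<circ> R \<circ> P = (\<lambda>v. sm c (P v))" using P_compress by blast
  then have "P (R (P \<xi>)) = sm c (P \<xi>)" by (metis comp_apply)
  then have Pu: "P u = sm c \<xi>" by (simp add: P_\<xi> R_def ip_\<xi>_\<xi> sm_one)
  have "ip u \<xi> = ip (P u) \<xi>" by (simp add: P_selfadjoint P_\<xi>)
  also have "\<dots> = c" by (simp add: Pu scale_left ip_\<xi>_\<xi>)
  finally show ?thesis using Pu by simp
qed

lemma state_P: "ip (P u) u = complex_of_real ((cmod (ip u \<xi>))\<^sup>2)"
  using complex_norm_square[of "ip \<xi> u"] by (simp add: P_eq scale_left herm[of \<xi> u] mult.commute)

lemma enorm_x: "enorm ip ein x = 1"
proof -
  have "op_norm ip P \<le> 1"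
    using cmod_ip_\<xi>_le hnorm_\<xi> by (intro op_norm_le) (simp add: P_eq hnorm_scale)
  moreover have "1 \<le> op_norm ip P"
    using hnorm_apply_le_op_norm[OF ein_bounded[of x x], of \<xi>] hnorm_\<xi> P_\<xi> by simp
  ultimately show ?thesis by (simp add: enorm_def)
qed

text \<open>\<open>x = \<langle>x,x\<rangle> x\<close>: the element \<open>w = x - \<langle>x,x\<rangle> x\<close> has \<open>\<langle>w,w\<rangle> = P - P\<^sup>2 - P\<^sup>2 + P\<^sup>3 = 0\<close>.\<close>

lemma act_P_x: "act P x = x"
proof -
  have cP: "compact_op sm ip P" by (rule ein_compact)
  have Px_x: "ein (act P x) x u = P u" for u by (simp add: ein_act[OF cP] P_idem)
  have x_Px: "ip (ein x (act P x) \<zeta>) \<zeta> = ip \<zeta> (P \<zeta>)" for \<zeta>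
    using ein_adjoint[of x "act P x" \<zeta> \<zeta>] Px_x by simp
  have Px_Px: "ip (ein (act P x) (act P x) \<zeta>) \<zeta> = ip \<zeta> (P \<zeta>)" for \<zeta>
  proof -
    have "ip (ein (act P x) (act P x) \<zeta>) \<zeta> = ip (ein x (act P x) \<zeta>) (P \<zeta>)"
      by (simp add: ein_act[OF cP] P_selfadjoint)
    also have "\<dots> = ip \<zeta> (P \<zeta>)" by (simp add: ein_adjoint Px_x P_idem)
    finally show ?thesis .
  qed
  define w where "w = x + esm (- 1) (act P x)"
  have "Re (ip (ein w w \<zeta>) \<zeta>) = 0" for \<zeta>
    unfolding w_def state_Re_expand using x_Px[of \<zeta>] Px_Px[of \<zeta>] P_selfadjoint[of \<zeta> \<zeta>] by simp
  then have "ein w w = (\<lambda>_. 0)"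
    using positive_op_eq_0[OF positive_op_ein] by blast
  then show ?thesis by (simp add: ein_eq_0_iff w_def esm_minus_one)
qed

lemma P_ein_x: "P (ein x y u) = ein x y u"
  by (metis act_P_x ein_act[OF ein_compact] comp_apply)

lemma state_x_eq: "ip (ein x y \<zeta>) \<zeta> = cnj (ip \<zeta> \<xi>) * ip (ein x y \<zeta>) \<xi>"
proof -
  have "ip (ein x y \<zeta>) \<zeta> = ip (ein x y \<zeta>) (P \<zeta>)" by (metis P_ein_x P_selfadjoint)
  then show ?thesis by (simp add: P_eq scale_right)
qed

lemma state_x_le: "hnorm ip \<zeta> \<le> 1 \<Longrightarrow> cmod (ip (ein x y \<zeta>) \<zeta>) \<le> enorm ip ein y"
proof -
  assume \<zeta>: "hnorm ip \<zeta> \<le> 1"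
  have "(cmod (ip (ein x y \<zeta>) \<zeta>))\<^sup>2 \<le> Re (ip (P \<zeta>) \<zeta>) * Re (ip (ein y y \<zeta>) \<zeta>)"
    by (rule state_cauchy_schwarz)
  also have "\<dots> \<le> 1 * (enorm ip ein y)\<^sup>2"
    using Re_state_le_enorm_power2[OF \<zeta>, of x] Re_state_le_enorm_power2[OF \<zeta>, of y] enorm_x
      ein_Re_diag_nonneg
    by (intro mult_mono) auto
  finally show ?thesis using enorm_nonneg power2_le_imp_le by simp
qed

lemma Re_state_add_x_le:
  assumes "cmod l = 1" "hnorm ip \<zeta> \<le> 1"
  shows "Re (ip (ein (x + esm l y) (x + esm l y) \<zeta>) \<zeta>)
           \<le> (cmod (ip \<zeta> \<xi>))\<^sup>2 + 2 * cmod (ip (ein x y \<zeta>) \<zeta>) + (enorm ip ein y)\<^sup>2"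
proof -
  have "Re (cnj l * ip (ein x y \<zeta>) \<zeta>) \<le> cmod (ip (ein x y \<zeta>) \<zeta>)"
    using complex_Re_le_cmod[of "cnj l * ip (ein x y \<zeta>) \<zeta>"] assms(1) by (simp add: norm_mult)
  then show ?thesis
    using Re_state_le_enorm_power2[OF assms(2), of y] assms(1) by (simp add: state_Re_expand state_P)
qed

lemma enorm_add_x_le: "cmod l = 1 \<Longrightarrow> enorm ip ein (x + esm l y) \<le> 1 + enorm ip ein y"
proof (rule enorm_le)
  fix \<zeta> assume "cmod l = 1" and \<zeta>: "hnorm ip \<zeta> \<le> 1"
  have "(cmod (ip \<zeta> \<xi>))\<^sup>2 \<le> 1" using cmod_ip_\<xi>_le[OF \<zeta>] by (simp add: power_le_one)
  then show "Re (ip (ein (x + esm l y) (x + esm l y) \<zeta>) \<zeta>) \<le> (1 + enorm ip ein y)\<^sup>2"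
    using Re_state_add_x_le[OF \<open>cmod l = 1\<close> \<zeta>, of y] state_x_le[OF \<zeta>, of y]
    by (simp add: power2_eq_square algebra_simps)
qed (simp add: enorm_nonneg add_nonneg_nonneg)

lemma state_x_le_at_\<xi>:
  assumes "hnorm ip \<zeta> \<le> 1"
  shows "cmod (ip (ein x y \<zeta>) \<zeta>)
           \<le> cmod (ip (ein x y \<xi>) \<xi>) + op_norm ip (ein x y) * hnorm ip (\<zeta> - sm (ip \<zeta> \<xi>) \<xi>)"
proof -
  define c where "c = ip \<zeta> \<xi>"
  define r where "r = \<zeta> - sm c \<xi>"
  have T: "bounded_op sm ip (ein x y)" by (rule ein_bounded)
  have c1: "cmod c \<le> 1" using cmod_ip_\<xi>_le[OF assms] c_def by simp
  have dec: "ein x y \<zeta> = ein x y r + sm c (ein x y \<xi>)"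
    by (metis r_def diff_add_cancel bounded_op_add[OF T] bounded_op_scale[OF T])
  have "ip (ein x y \<zeta>) \<zeta> = cnj c * ip (ein x y \<zeta>) \<xi>"
    unfolding c_def by (rule state_x_eq)
  also have "\<dots> = cnj c * (ip (ein x y r) \<xi> + c * ip (ein x y \<xi>) \<xi>)"
    by (simp only: dec add_left scale_left)
  finally have "cmod (ip (ein x y \<zeta>) \<zeta>) \<le> cmod (ip (ein x y r) \<xi>) + cmod (ip (ein x y \<xi>) \<xi>)"
    using c1 norm_triangle_ineq[of "ip (ein x y r) \<xi>" "c * ip (ein x y \<xi>) \<xi>"]
    by (simp add: norm_mult) (smt (verit) mult_left_le_one_le norm_ge_zero)
  moreover have "cmod (ip (ein x y r) \<xi>) \<le> op_norm ip (ein x y) * hnorm ip r"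
    using ip_cauchy_schwarz[of "ein x y r" \<xi>] hnorm_apply_le[OF T, of r] hnorm_\<xi> by simp
  ultimately show ?thesis by (simp add: r_def c_def)
qed

lemma norm_parallel_if_attained_at_\<xi>:
  assumes "cmod (ip (ein x y \<xi>) \<xi>) = enorm ip ein y"
  shows "norm_parallel ip esm ein x y"
proof -
  define s where "s = enorm ip ein y"
  obtain l where l: "cmod l = 1" and rot: "cnj l * ip (ein x y \<xi>) \<xi> = complex_of_real s"
    using exists_unimodular_cnj_mult assms s_def by metis
  have "s\<^sup>2 \<le> Re (ip (ein y y \<xi>) \<xi>)"
    using state_cauchy_schwarz[of x y \<xi>] assms state_P[of \<xi>] ip_\<xi>_\<xi> s_def by simp
  then have "(1 + s)\<^sup>2 \<le> Re (ip (ein (x + esm l y) (x + esm l y) \<xi>) \<xi>)"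
    using l rot state_P[of \<xi>] ip_\<xi>_\<xi> by (simp add: state_Re_expand power2_eq_square algebra_simps)
  then have "1 + s \<le> enorm ip ein (x + esm l y)"
    using hnorm_\<xi> enorm_nonneg s_def by (intro enorm_ge) (auto intro: add_nonneg_nonneg)
  with enorm_add_x_le[OF l, of y] have "enorm ip ein (x + esm l y) = enorm ip ein x + enorm ip ein y"
    using enorm_x s_def by simp
  then show ?thesis unfolding norm_parallel_def using l by blast
qed

lemma enorm_le_state_at_\<xi>_plus:
  assumes l: "cmod l = 1" and eq: "enorm ip ein (x + esm l y) = 1 + enorm ip ein y"
    and \<rho>: "0 < \<rho>" "\<rho> \<le> 1"
  shows "enorm ip ein y \<le> cmod (ip (ein x y \<xi>) \<xi>) + (op_norm ip (ein x y) + 1) * \<rho>"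
proof -
  define s where "s = enorm ip ein y"
  define M where "M = op_norm ip (ein x y)"
  obtain \<zeta> where \<zeta>: "hnorm ip \<zeta> \<le> 1"
    and big: "(1 + s)\<^sup>2 - \<rho>\<^sup>2 < Re (ip (ein (x + esm l y) (x + esm l y) \<zeta>) \<zeta>)"
    using exists_state_near_enorm[of "\<rho>\<^sup>2" "x + esm l y"] \<rho> eq s_def by auto
  define a where "a = (cmod (ip \<zeta> \<xi>))\<^sup>2"
  define t where "t = cmod (ip (ein x y \<zeta>) \<zeta>)"
  have "a \<le> 1" using cmod_ip_\<xi>_le[OF \<zeta>] a_def by (simp add: power_le_one)
  moreover have "t \<le> s" using state_x_le[OF \<zeta>] t_def s_def by simp
  moreover have "(1 + s)\<^sup>2 - \<rho>\<^sup>2 < a + 2 * t + s\<^sup>2"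
    using big Re_state_add_x_le[OF l \<zeta>, of y] a_def t_def s_def by simp
  ultimately have a_big: "1 - \<rho>\<^sup>2 < a" and t_big: "s - \<rho>\<^sup>2 / 2 < t"
    by (simp_all add: power2_eq_square algebra_simps)
  have "(hnorm ip (\<zeta> - sm (ip \<zeta> \<xi>) \<xi>))\<^sup>2 < \<rho>\<^sup>2"
    using hnorm_diff_proj_power2[OF hnorm_\<xi>, of \<zeta>] \<zeta> hnorm_nonneg[of \<zeta>] a_big a_def
    by (smt (verit) power_le_one)
  then have "hnorm ip (\<zeta> - sm (ip \<zeta> \<xi>) \<xi>) < \<rho>"
    using \<rho>(1) by (simp add: power_less_imp_less_base)
  then have "t \<le> cmod (ip (ein x y \<xi>) \<xi>) + M * \<rho>"
    using state_x_le_at_\<xi>[OF \<zeta>, of y] op_norm_nonneg[OF ein_bounded] t_def M_def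
    by (smt (verit) mult_left_mono)
  moreover have "\<rho>\<^sup>2 \<le> \<rho>" using \<rho> by (simp add: power2_eq_square mult_left_le_one_le)
  ultimately show ?thesis using t_big \<rho>(1) s_def M_def by (simp add: algebra_simps)
qed

lemma attained_at_\<xi>_if_norm_parallel:
  assumes "norm_parallel ip esm ein x y"
  shows "cmod (ip (ein x y \<xi>) \<xi>) = enorm ip ein y"
proof -
  obtain l where l: "cmod l = 1" and eq: "enorm ip ein (x + esm l y) = 1 + enorm ip ein y"
    using assms enorm_x unfolding norm_parallel_def by auto
  define M where "M = op_norm ip (ein x y)"
  have M0: "0 \<le> M" using op_norm_nonneg[OF ein_bounded] M_def by simp
  have "enorm ip ein y \<le> cmod (ip (ein x y \<xi>) \<xi>)"
  proof (rule field_le_epsilon)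
    fix e :: real assume "0 < e"
    define \<rho> where "\<rho> = min 1 (e / (M + 1))"
    have \<rho>: "0 < \<rho>" "\<rho> \<le> 1" using \<open>0 < e\<close> M0 by (simp_all add: \<rho>_def)
    have "(M + 1) * \<rho> \<le> (M + 1) * (e / (M + 1))"
      using M0 by (intro mult_left_mono) (simp_all add: \<rho>_def)
    then have "(M + 1) * \<rho> \<le> e" using M0 by simp
    then show "enorm ip ein y \<le> cmod (ip (ein x y \<xi>) \<xi>) + e"
      using enorm_le_state_at_\<xi>_plus[OF l eq \<rho>] M_def by simp
  qed
  moreover have "cmod (ip (ein x y \<xi>) \<xi>) \<le> enorm ip ein y"
    using state_x_le hnorm_\<xi> by simp
  ultimately show ?thesis by simp
qed

lemma attained_at_\<xi>_if_attained:
  assumes \<zeta>: "hnorm ip \<zeta> = 1" and att: "cmod (ip (ein x y \<zeta>) \<zeta>) = enorm ip ein y"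
  shows "cmod (ip (ein x y \<xi>) \<xi>) = enorm ip ein y"
proof -
  define s where "s = enorm ip ein y"
  have "cmod (ip (ein x y \<xi>) \<xi>) \<le> s" using state_x_le hnorm_\<xi> s_def by simp
  moreover have "s \<le> cmod (ip (ein x y \<xi>) \<xi>)"
  proof (cases "s = 0")
    case False
    have "s\<^sup>2 \<le> (cmod (ip \<zeta> \<xi>))\<^sup>2 * Re (ip (ein y y \<zeta>) \<zeta>)"
      using state_cauchy_schwarz[of x y \<zeta>] state_P[of \<zeta>] att s_def by simp
    also have "\<dots> \<le> (cmod (ip \<zeta> \<xi>))\<^sup>2 * s\<^sup>2"
      using Re_state_le_enorm_power2[of \<zeta> y] \<zeta> s_def by (intro mult_left_mono) simp_all
    finally have "1 \<le> (cmod (ip \<zeta> \<xi>))\<^sup>2" using False by simp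
    then have "(hnorm ip (\<zeta> - sm (ip \<zeta> \<xi>) \<xi>))\<^sup>2 \<le> 0"
      using hnorm_diff_proj_power2[OF hnorm_\<xi>, of \<zeta>] \<zeta> by simp
    then have "hnorm ip (\<zeta> - sm (ip \<zeta> \<xi>) \<xi>) = 0" by simp
    then show ?thesis using state_x_le_at_\<xi>[of \<zeta> y] \<zeta> att s_def by simp
  qed (simp add: s_def)
  ultimately show ?thesis using s_def by simp
qed

end

theorem theorem2p4:
  fixes sm :: "complex \<Rightarrow> 'h::ab_group_add \<Rightarrow> 'h" and ip :: "'h \<Rightarrow> 'h \<Rightarrow> complex"
    and esm :: "complex \<Rightarrow> 'e::ab_group_add \<Rightarrow> 'e" and act :: "('h \<Rightarrow> 'h) \<Rightarrow> 'e \<Rightarrow> 'e"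
    and ein :: "'e \<Rightarrow> 'e \<Rightarrow> 'h \<Rightarrow> 'h" and x y :: 'e
  assumes "hilbert_K_module sm ip esm act ein"
    and "minimal_projection sm ip (ein x x)"
  shows "norm_parallel ip esm ein x y \<longleftrightarrow>
    (\<exists>\<xi>. hnorm ip \<xi> = 1 \<and> cmod (ip (ein x y \<xi>) \<xi>) = enorm ip ein y)"
proof -
  interpret minimal_inner_square sm ip esm act ein x
    using assms by (simp add: minimal_inner_square_def minimal_inner_square_axioms_def hK_module_def)
  show ?thesis
  proof
    show "\<exists>\<zeta>. hnorm ip \<zeta> = 1 \<and> cmod (ip (ein x y \<zeta>) \<zeta>) = enorm ip ein y"
      if "norm_parallel ip esm ein x y"
      using attained_at_\<xi>_if_norm_parallel[OF that] hnorm_\<xi> by blast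
    show "norm_parallel ip esm ein x y"
      if "\<exists>\<zeta>. hnorm ip \<zeta> = 1 \<and> cmod (ip (ein x y \<zeta>) \<zeta>) = enorm ip ein y"
      using that attained_at_\<xi>_if_attained norm_parallel_if_attained_at_\<xi> by blast
  qed
qed

end
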